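(* Let $M=(N,X,f,p)$ be a mechanism and $\hat M=(N,\hat X,\hat f,\hat p)$ a simplification of $M$ that satisfies outcome reducibility. Then $\hat M$ is total with respect to Nash equilibria: for every type profile $\theta$ and every Nash equilibrium $x$ of $M$ for $\theta$, there is a Nash equilibrium of $\hat M$ for $\theta$ yielding the same outcome and the same payments as $x$.
   Context: A mechanism $(N,X,f,p)$: agents $N=\{1,\dots,n\}$ with types $\theta_i\in\Theta_i$ and valuations $v_i:\Omega\times\Theta_i\to\mathbb{R}$ over outcomes $\Omega$; message sets $X=\prod_i X_i$, social choice function $f:X\to\Omega$, payment function $p:X\to\mathbb{R}^n$; utility $u_i(x,\theta_i)=v_i(f(x),\theta_i)-p_i(x)$. A simplification $(N,\hat X,\hat f,\hat p)$ of it has $\hat X=\prod_i\hat X_i$ with $\hat X_i\subseteq X_i$, $\hat f=f|_{\hat X}$, $\hat p=p|_{\hat X}$. For a fixed type profile $\theta$, a message profile $x$ is a Nash equilibrium if no agent $i$ has a message in its message set giving it strictly higher utility against $x_{-i}$. Outcome reducibility: there is a map $h:X\to\hat X$ such that (i) $f(x)=f(h(x))$ and $p(x)=p(h(x))$ for all $x\in X$; and (ii) for every type profile $\theta$, every $i\in N$, every $x\in X$ and every $\hat x'_i\in\hat X_i$ there exists $x'_i\in X_i$ with $u_i((x'_i,x_{-i}),\theta_i)\ge u_i((\hat x'_i,h_{-i}(x)),\theta_i)$, where $h_{-i}(x)$ denotes the components of $h(x)$ other than $i$'s. *)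

theory Defs
  imports Complex_Main
begin

text \<open>Agents are the elements of a finite type 'i (N = UNIV).\<close>

definition profiles :: "('i \<Rightarrow> 'm set) \<Rightarrow> ('i \<Rightarrow> 'm) set" where
  "profiles X = {x. \<forall>i. x i \<in> X i}"

definition util ::
  "('i \<Rightarrow> 'o \<Rightarrow> 't \<Rightarrow> real) \<Rightarrow> (('i \<Rightarrow> 'm) \<Rightarrow> 'o) \<Rightarrow> (('i \<Rightarrow> 'm) \<Rightarrow> 'i \<Rightarrow> real)
    \<Rightarrow> 'i \<Rightarrow> ('i \<Rightarrow> 'm) \<Rightarrow> 't \<Rightarrow> real" where
  "util v f p i x t = v i (f x) t - p x i"

definition nash_eq ::
  "('i \<Rightarrow> 'm set) \<Rightarrow> ('i \<Rightarrow> 'o \<Rightarrow> 't \<Rightarrow> real) \<Rightarrow> (('i \<Rightarrow> 'm) \<Rightarrow> 'o) \<Rightarrow> (('i \<Rightarrow> 'm) \<Rightarrow> 'i \<Rightarrow> real)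
    \<Rightarrow> ('i \<Rightarrow> 't) \<Rightarrow> ('i \<Rightarrow> 'm) \<Rightarrow> bool" where
  "nash_eq X v f p \<theta> x \<longleftrightarrow> x \<in> profiles X \<and>
     (\<forall>i. \<forall>m \<in> X i. \<not> util v f p i (x(i := m)) (\<theta> i) > util v f p i x (\<theta> i))"

text \<open>Outcome reducibility of the simplification with message sets Xh (f, p restricted).\<close>
definition outcome_reducible ::
  "('i \<Rightarrow> 'm set) \<Rightarrow> ('i \<Rightarrow> 'm set) \<Rightarrow> ('i \<Rightarrow> 't set) \<Rightarrow> ('i \<Rightarrow> 'o \<Rightarrow> 't \<Rightarrow> real)
    \<Rightarrow> (('i \<Rightarrow> 'm) \<Rightarrow> 'o) \<Rightarrow> (('i \<Rightarrow> 'm) \<Rightarrow> 'i \<Rightarrow> real) \<Rightarrow> bool" where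
  "outcome_reducible X Xh \<Theta> v f p \<longleftrightarrow>
     (\<exists>h. (\<forall>x \<in> profiles X. h x \<in> profiles Xh) \<and>
          (\<forall>x \<in> profiles X. f x = f (h x) \<and> p x = p (h x)) \<and>
          (\<forall>\<theta> \<in> profiles \<Theta>. \<forall>i. \<forall>x \<in> profiles X. \<forall>m' \<in> Xh i.
              \<exists>m \<in> X i. util v f p i (x(i := m)) (\<theta> i) \<ge> util v f p i ((h x)(i := m')) (\<theta> i)))"

end

theory Submission
  imports Defs
begin

text \<open>The reduction map h sends equilibria of M to equilibria of the simplification: a deviation m' of
agent i against h x is matched by a deviation m against x that is at least as good, which
in turn is no better than x itself, and x and h x give i the same utility because they
have the same outcome and payments.\<close>

lemma util_eqI:
  assumes "f x = f y" and "p x = p y"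
  shows "util v f p i x t = util v f p i y t"
  using assms by (simp add: util_def)

lemma nash_eq_reduced:
  assumes ne: "nash_eq X v f p \<theta> x"
    and hx: "h x \<in> profiles Xh"
    and same: "f (h x) = f x" "p (h x) = p x"
    and dominated: "\<And>i m'. m' \<in> Xh i \<Longrightarrow>
          \<exists>m \<in> X i. util v f p i (x(i := m)) (\<theta> i) \<ge> util v f p i ((h x)(i := m')) (\<theta> i)"
  shows "nash_eq Xh v f p \<theta> (h x)"
  unfolding nash_eq_def
proof (intro conjI allI ballI)
  show "h x \<in> profiles Xh" by (fact hx)
next
  fix i m' assume "m' \<in> Xh i"
  then obtain m where "m \<in> X i"
    and better: "util v f p i (x(i := m)) (\<theta> i) \<ge> util v f p i ((h x)(i := m')) (\<theta> i)"
    using dominated by blast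
  then have "\<not> util v f p i (x(i := m)) (\<theta> i) > util v f p i x (\<theta> i)"
    using ne by (simp add: nash_eq_def)
  moreover have "util v f p i (h x) (\<theta> i) = util v f p i x (\<theta> i)"
    using same by (rule util_eqI)
  ultimately show "\<not> util v f p i ((h x)(i := m')) (\<theta> i) > util v f p i (h x) (\<theta> i)"
    using better by linarith
qed

theorem lemma1:
  fixes X Xh :: "'i::finite \<Rightarrow> 'm set"
    and \<Theta> :: "'i \<Rightarrow> 't set"
    and v :: "'i \<Rightarrow> 'o \<Rightarrow> 't \<Rightarrow> real"
    and f :: "('i \<Rightarrow> 'm) \<Rightarrow> 'o"
    and p :: "('i \<Rightarrow> 'm) \<Rightarrow> 'i \<Rightarrow> real"
  assumes simp: "\<And>i. Xh i \<subseteq> X i"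
    and red: "outcome_reducible X Xh \<Theta> v f p"
  shows "\<forall>\<theta> \<in> profiles \<Theta>. \<forall>x. nash_eq X v f p \<theta> x \<longrightarrow>
           (\<exists>xh. nash_eq Xh v f p \<theta> xh \<and> f xh = f x \<and> p xh = p x)"
proof (intro ballI allI impI)
  fix \<theta> x assume \<theta>: "\<theta> \<in> profiles \<Theta>" and ne: "nash_eq X v f p \<theta> x"
  obtain h where into: "\<forall>x \<in> profiles X. h x \<in> profiles Xh"
    and same: "\<forall>x \<in> profiles X. f x = f (h x) \<and> p x = p (h x)"
    and dominated: "\<forall>\<theta> \<in> profiles \<Theta>. \<forall>i. \<forall>x \<in> profiles X. \<forall>m' \<in> Xh i.
          \<exists>m \<in> X i. util v f p i (x(i := m)) (\<theta> i) \<ge> util v f p i ((h x)(i := m')) (\<theta> i)"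
    using red unfolding outcome_reducible_def by blast
  have x: "x \<in> profiles X" using ne by (simp add: nash_eq_def)
  have "nash_eq Xh v f p \<theta> (h x)"
  proof (rule nash_eq_reduced[OF ne])
    show "h x \<in> profiles Xh" "f (h x) = f x" "p (h x) = p x"
      using into same x by auto
    show "\<exists>m \<in> X i. util v f p i (x(i := m)) (\<theta> i) \<ge> util v f p i ((h x)(i := m')) (\<theta> i)"
      if "m' \<in> Xh i" for i m'
      using dominated \<theta> x that by blast
  qed
  then show "\<exists>xh. nash_eq Xh v f p \<theta> xh \<and> f xh = f x \<and> p xh = p x"
    using same x by metis
qed

end
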